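(* Consider $N_a$ agents and $n$ anchors. For each agent $k\in\{1,\dots,N_a\}$ let $\varrho_k>0$ and let $\mathcal{I}_k$ be a finite index set; for each $k$, $i\in\mathcal{I}_k$ and $j\in\{1,\dots,n\}$ let $\hat\phi^{(i)}_{kj}\in\mathbb{R}$, $\tilde\phi^{(i)}_{kj}\ge0$, $\underline\xi^{(i)}_{kj}\ge0$ be given and let $\underline{\mathbf{R}}^{(i)}_k=\operatorname{diag}\{\underline\xi^{(i)}_{k1},\dots,\underline\xi^{(i)}_{kn}\}$. For a positive integer $M\ge3$ and $m\in\mathcal{M}=\{0,\dots,M-1\}$, let $\vartheta_m=(2m+1)\pi/M$ and define $\mathbf{h}^{(i)}_{k,m},\mathbf{g}^{(i)}_{k,m}\in\mathbb{R}^n$ by $[\mathbf{h}^{(i)}_{k,m}]_j=\max_{|\epsilon|\le2\tilde\phi^{(i)}_{kj}}\cos(2\hat\phi^{(i)}_{kj}-\vartheta_m+\epsilon)$ and $[\mathbf{g}^{(i)}_{k,m}]_j=[\mathbf{h}^{(i)}_{k,m}]_j/\cos(\pi/M)$. For $\mathbf{x}\succeq\mathbf{0}$ let $$\overline{\mathcal{P}}^{(i)}_M(\mathbf{p}_k;\mathbf{x})=\max_{m\in\mathcal{M}}\frac{4\cdot\mathbf{1}^{\mathsf T}\underline{\mathbf{R}}^{(i)}_k\mathbf{x}}{(\mathbf{1}^{\mathsf T}\underline{\mathbf{R}}^{(i)}_k\mathbf{x})^2-(\mathbf{g}^{(i)\mathsf T}_{k,m}\underline{\mathbf{R}}^{(i)}_k\mathbf{x})^2},$$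 and let $\underline{\mathcal{P}}^{(i)}_M(\mathbf{p}_k;\mathbf{x})$ be defined identically with $\mathbf{h}^{(i)}_{k,m}$ in place of $\mathbf{g}^{(i)}_{k,m}$, where each fraction whose denominator is nonpositive is regarded as $+\infty$. Let $c_1,\dots,c_L$ be affine functions on $\mathbb{R}^n$. Then the problem $$\min_{\mathbf{x}\succeq\mathbf{0}}\ \mathbf{1}^{\mathsf T}\mathbf{x}\ \ \text{s.t.}\ \ \overline{\mathcal{P}}^{(i)}_M(\mathbf{p}_k;\mathbf{x})\le\varrho_k\ \ \forall k,\ \forall i\in\mathcal{I}_k,\quad c_l(\mathbf{x})\le0\ \ (l=1,\dots,L)$$ is equivalent to the second-order cone program $$\min_{\mathbf{x}\succeq\mathbf{0}}\ \mathbf{1}^{\mathsf T}\mathbf{x}\ \ \text{s.t.}\ \ \big\|\mathbf{A}^{(i)}_{k,m}\underline{\mathbf{R}}^{(i)}_k\mathbf{x}+\mathbf{b}_k\big\|\le\mathbf{1}^{\mathsf T}\underline{\mathbf{R}}^{(i)}_k\mathbf{x}-2\varrho_k^{-1}\ \ \forall m\in\mathcal{M},\ \forall k,\ \forall i\in\mathcal{I}_k,\quad c_l(\mathbf{x})\le0,$$ where $\mathbf{A}^{(i)}_{k,m}=[\mathbf{g}^{(i)}_{k,m}\ \ \mathbf{0}]^{\mathsf T}\in\mathbb{R}^{2\times n}$ and $\mathbf{b}_k=[0\ \ 2\varrho_k^{-1}]^{\mathsf T}$. Similarly, the problem with $\underline{\mathcal{P}}^{(i)}_M$ in place of $\overline{\mathcal{P}}^{(i)}_M$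 is equivalent to the same second-order cone program with $\mathbf{A}^{(i)}_{k,m}=[\mathbf{h}^{(i)}_{k,m}\ \ \mathbf{0}]^{\mathsf T}$.
   Context: $\mathbf{1}$ is the all-ones vector, $\mathbf{0}$ the zero vector, $\|\cdot\|$ the Euclidean norm; $\mathbf{x}\succeq\mathbf{0}$ means entrywise nonnegative. $\mathbf{x}$ is the anchor transmit power vector; for agent $k$ and uncertainty cell $i$, $\hat\phi^{(i)}_{kj}$ and $\tilde\phi^{(i)}_{kj}$ are the nominal agent–anchor angle and its angular uncertainty, and $\underline\xi^{(i)}_{kj}$ is the lower bound of the equivalent ranging coefficient. "Equivalent" means the two problems have the same feasible set (and objective). *)

theory Defs
  imports "HOL-Analysis.Analysis" "HOL-Library.Extended_Real"
begin

definition ones_vec :: "real^'n::finite" where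
  "ones_vec = (\<chi> j. 1)"

definition nonneg_vec :: "real^'n::finite \<Rightarrow> bool" where
  "nonneg_vec x \<longleftrightarrow> (\<forall>j. 0 \<le> x $ j)"

definition diag_mat :: "('n::finite \<Rightarrow> real) \<Rightarrow> real^'n^'n" where
  "diag_mat d = (\<chi> i j. if i = j then d i else 0)"

definition theta :: "nat \<Rightarrow> nat \<Rightarrow> real" where
  "theta M m = (2 * real m + 1) * pi / real M"

definition hvec :: "('n::finite \<Rightarrow> real) \<Rightarrow> ('n \<Rightarrow> real) \<Rightarrow> real \<Rightarrow> real^'n" where
  "hvec phihat phitil th =
     (\<chi> j. Sup {cos (2 * phihat j - th + e) | e. \<bar>e\<bar> \<le> 2 * phitil j})"

definition gvec :: "nat \<Rightarrow> ('n::finite \<Rightarrow> real) \<Rightarrow> ('n \<Rightarrow> real) \<Rightarrow> real \<Rightarrow> real^'n" where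
  "gvec M phihat phitil th = (1 / cos (pi / real M)) *\<^sub>R hvec phihat phitil th"

definition frac_term :: "real \<Rightarrow> real \<Rightarrow> ereal" where
  "frac_term S G = (if S\<^sup>2 - G\<^sup>2 \<le> 0 then \<infinity> else ereal (4 * S / (S\<^sup>2 - G\<^sup>2)))"

definition P_M :: "nat \<Rightarrow> (nat \<Rightarrow> real^'n::finite) \<Rightarrow> real^'n^'n \<Rightarrow> real^'n \<Rightarrow> ereal" where
  "P_M M v R x = Max ((\<lambda>m. frac_term (ones_vec \<bullet> (R *v x)) (v m \<bullet> (R *v x))) ` {0..<M})"

definition A_mat :: "real^'n::finite \<Rightarrow> real^'n^2" where
  "A_mat v = (\<chi> r. if r = 1 then v else 0)"

definition b_vec :: "real \<Rightarrow> real^2" where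
  "b_vec \<rho> = vector [0, 2 / \<rho>]"

end

theory Submission
  imports Defs
begin

text \<open>Each fraction constraint \<open>4S/(S\<^sup>2 - G\<^sup>2) \<le> \<rho>\<close> (with \<open>S = 1\<^sup>TRx \<ge> 0\<close>) is, after clearing
  the positive denominator, \<open>S\<^sup>2 - 4S/\<rho> \<ge> G\<^sup>2\<close>; completing the square gives
  \<open>G\<^sup>2 + (2/\<rho>)\<^sup>2 \<le> (S - 2/\<rho>)\<^sup>2\<close> with \<open>S \<ge> 2/\<rho>\<close>, i.e. the cone constraint
  \<open>\<parallel>(G, 2/\<rho>)\<parallel> \<le> S - 2/\<rho>\<close>. A maximum over \<open>m\<close> is bounded iff every term is, so the
  feasible sets coincide constraint by constraint.\<close>

lemma sqrt_le_iff_square_le: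
  fixes x y :: real
  assumes "0 \<le> x"
  shows "sqrt x \<le> y \<longleftrightarrow> 0 \<le> y \<and> x \<le> y\<^sup>2"
  using assms real_sqrt_ge_zero[of x] sqrt_le_D[of x y] real_le_lsqrt[of y x] by linarith

lemma fraction_le_iff_completed_square:
  fixes S G r :: real
  assumes r: "0 < r" and S: "0 \<le> S"
  shows "(0 < S\<^sup>2 - G\<^sup>2 \<and> 4 * S / (S\<^sup>2 - G\<^sup>2) \<le> r)
           \<longleftrightarrow> (2 / r \<le> S \<and> G\<^sup>2 + (2 / r)\<^sup>2 \<le> (S - 2 / r)\<^sup>2)"
proof -
  have square: "(S - 2 / r)\<^sup>2 = S\<^sup>2 - 4 * S / r + (2 / r)\<^sup>2"
    by (simp add: power2_diff)
  have cleared: "4 * S \<le> r * D \<longleftrightarrow> 4 * S / r \<le> D" for D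
    using r by (simp add: pos_divide_le_eq mult.commute)
  show ?thesis
  proof
    assume "0 < S\<^sup>2 - G\<^sup>2 \<and> 4 * S / (S\<^sup>2 - G\<^sup>2) \<le> r"
    then have pos: "0 < S\<^sup>2 - G\<^sup>2" and "4 * S \<le> r * (S\<^sup>2 - G\<^sup>2)"
      by (auto simp: pos_divide_le_eq mult.commute)
    then have bound: "4 * S / r \<le> S\<^sup>2 - G\<^sup>2"
      using cleared by blast
    have "0 < S"
      using pos S by (cases "S = 0") auto
    have "4 * S \<le> r * S\<^sup>2"
      using \<open>4 * S \<le> r * (S\<^sup>2 - G\<^sup>2)\<close> r by (smt (verit) mult_left_mono zero_le_power2)
    then have "4 \<le> r * S"
      using \<open>0 < S\<close> by (simp add: power2_eq_square)
    then have "2 / r \<le> S"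
      using r by (simp add: pos_divide_le_eq mult.commute)
    with bound square show "2 / r \<le> S \<and> G\<^sup>2 + (2 / r)\<^sup>2 \<le> (S - 2 / r)\<^sup>2"
      by linarith
  next
    assume "2 / r \<le> S \<and> G\<^sup>2 + (2 / r)\<^sup>2 \<le> (S - 2 / r)\<^sup>2"
    then have "2 / r \<le> S" and bound: "4 * S / r \<le> S\<^sup>2 - G\<^sup>2"
      using square by linarith+
    then have "0 < S"
      using r by (smt (verit) divide_pos_pos)
    then have pos: "0 < S\<^sup>2 - G\<^sup>2"
      using bound r divide_pos_pos[of "4 * S" r] by linarith
    have "4 * S \<le> r * (S\<^sup>2 - G\<^sup>2)"
      using bound cleared by blast
    with pos show "0 < S\<^sup>2 - G\<^sup>2 \<and> 4 * S / (S\<^sup>2 - G\<^sup>2) \<le> r"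
      by (simp add: pos_divide_le_eq mult.commute)
  qed
qed

lemma frac_term_le_iff_cone:
  assumes "0 < r" and "0 \<le> S"
  shows "frac_term S G \<le> ereal r \<longleftrightarrow> sqrt (G\<^sup>2 + (2 / r)\<^sup>2) \<le> S - 2 / r"
  using fraction_le_iff_completed_square[OF assms, of G]
  by (auto simp: frac_term_def sqrt_le_iff_square_le)

lemma diag_mat_mult_vec: "diag_mat d *v x = (\<chi> j. d j * x $ j)"
  by (simp add: diag_mat_def matrix_vector_mult_def vec_eq_iff
      if_distrib[of "\<lambda>a. a * _"] cong: if_cong)

lemma ones_inner_diag_mult_nonneg:
  assumes "\<And>j. 0 \<le> d j" and "nonneg_vec x"
  shows "0 \<le> ones_vec \<bullet> (diag_mat d *v x)"
  using assms by (auto simp: diag_mat_mult_vec ones_vec_def inner_vec_def nonneg_vec_def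
      intro!: sum_nonneg)

lemma norm_A_mat_mult_plus_b_vec:
  "norm (A_mat w *v y + b_vec r) = sqrt ((w \<bullet> y)\<^sup>2 + (2 / r)\<^sup>2)"
  by (simp add: norm_vec_def L2_set_def sum_2 A_mat_def b_vec_def matrix_vector_mult_def
      inner_vec_def vector_2 power2_eq_square)

lemma P_M_le_iff_cone_constraints:
  assumes "0 < r" and "\<And>j. 0 \<le> d j" and "nonneg_vec x" and "0 < M"
  shows "P_M M v (diag_mat d) x \<le> ereal r \<longleftrightarrow>
    (\<forall>m\<in>{0..<M}. norm (A_mat (v m) *v (diag_mat d *v x) + b_vec r)
                   \<le> ones_vec \<bullet> (diag_mat d *v x) - 2 / r)"
proof -
  have "P_M M v (diag_mat d) x \<le> ereal r \<longleftrightarrow>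
     (\<forall>m\<in>{0..<M}. frac_term (ones_vec \<bullet> (diag_mat d *v x)) (v m \<bullet> (diag_mat d *v x)) \<le> ereal r)"
    unfolding P_M_def using \<open>0 < M\<close> by (subst Max_le_iff) auto
  then show ?thesis
    using frac_term_le_iff_cone[OF \<open>0 < r\<close> ones_inner_diag_mult_nonneg[OF assms(2,3)]]
    by (simp add: norm_A_mat_mult_plus_b_vec)
qed

lemma feasible_set_P_M_eq_cone:
  fixes v :: "nat \<Rightarrow> 'i \<Rightarrow> nat \<Rightarrow> real^'n::finite"
  assumes "\<And>k. k \<in> K \<Longrightarrow> 0 < rho k"
    and "\<And>k i j. k \<in> K \<Longrightarrow> i \<in> I k \<Longrightarrow> 0 \<le> xi k i j"
    and "0 < M"
  shows "{x. nonneg_vec x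
            \<and> (\<forall>k\<in>K. \<forall>i\<in>I k. P_M M (v k i) (diag_mat (xi k i)) x \<le> ereal (rho k))
            \<and> C x}
       = {x. nonneg_vec x
            \<and> (\<forall>m\<in>{0..<M}. \<forall>k\<in>K. \<forall>i\<in>I k.
                 norm (A_mat (v k i m) *v (diag_mat (xi k i) *v x) + b_vec (rho k))
                   \<le> ones_vec \<bullet> (diag_mat (xi k i) *v x) - 2 / rho k)
            \<and> C x}"
proof -
  have "(P_M M (v k i) (diag_mat (xi k i)) x \<le> ereal (rho k)) \<longleftrightarrow>
      (\<forall>m\<in>{0..<M}. norm (A_mat (v k i m) *v (diag_mat (xi k i) *v x) + b_vec (rho k))
                    \<le> ones_vec \<bullet> (diag_mat (xi k i) *v x) - 2 / rho k)"
    if "nonneg_vec x" "k \<in> K" "i \<in> I k" for x k i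
    by (rule P_M_le_iff_cone_constraints[OF assms(1)[OF that(2)] assms(2)[OF that(2,3)] that(1) assms(3)])
  then show ?thesis
    by (intro Collect_cong) blast
qed

theorem proposition5:
  fixes Na :: nat and n_dummy :: "'n::finite itself"
    and rho :: "nat \<Rightarrow> real"
    and I :: "nat \<Rightarrow> 'i set"
    and phihat phitil xi :: "nat \<Rightarrow> 'i \<Rightarrow> 'n \<Rightarrow> real"
    and M L :: nat
    and c :: "nat \<Rightarrow> real^'n \<Rightarrow> real"
  assumes rho_pos: "\<And>k. k \<in> {1..Na} \<Longrightarrow> rho k > 0"
    and I_fin: "\<And>k. k \<in> {1..Na} \<Longrightarrow> finite (I k)"
    and phitil_nn: "\<And>k i j. k \<in> {1..Na} \<Longrightarrow> i \<in> I k \<Longrightarrow> phitil k i j \<ge> 0"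
    and xi_nn: "\<And>k i j. k \<in> {1..Na} \<Longrightarrow> i \<in> I k \<Longrightarrow> xi k i j \<ge> 0"
    and M_ge: "M \<ge> 3"
    and c_affine: "\<And>l. l \<in> {1..L} \<Longrightarrow> \<exists>a b. c l = (\<lambda>x. a \<bullet> x + b)"
  shows
   "{x :: real^'n. nonneg_vec x
       \<and> (\<forall>k\<in>{1..Na}. \<forall>i\<in>I k.
            P_M M (\<lambda>m. gvec M (phihat k i) (phitil k i) (theta M m)) (diag_mat (xi k i)) x
              \<le> ereal (rho k))
       \<and> (\<forall>l\<in>{1..L}. c l x \<le> 0)}
    = {x :: real^'n. nonneg_vec x
       \<and> (\<forall>m\<in>{0..<M}. \<forall>k\<in>{1..Na}. \<forall>i\<in>I k.
            norm (A_mat (gvec M (phihat k i) (phitil k i) (theta M m)) *v (diag_mat (xi k i) *v x)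
                  + b_vec (rho k))
              \<le> ones_vec \<bullet> (diag_mat (xi k i) *v x) - 2 / rho k)
       \<and> (\<forall>l\<in>{1..L}. c l x \<le> 0)}
   \<and>
   {x :: real^'n. nonneg_vec x
       \<and> (\<forall>k\<in>{1..Na}. \<forall>i\<in>I k.
            P_M M (\<lambda>m. hvec (phihat k i) (phitil k i) (theta M m)) (diag_mat (xi k i)) x
              \<le> ereal (rho k))
       \<and> (\<forall>l\<in>{1..L}. c l x \<le> 0)}
    = {x :: real^'n. nonneg_vec x
       \<and> (\<forall>m\<in>{0..<M}. \<forall>k\<in>{1..Na}. \<forall>i\<in>I k.
            norm (A_mat (hvec (phihat k i) (phitil k i) (theta M m)) *v (diag_mat (xi k i) *v x)
                  + b_vec (rho k))
              \<le> ones_vec \<bullet> (diag_mat (xi k i) *v x) - 2 / rho k)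
       \<and> (\<forall>l\<in>{1..L}. c l x \<le> 0)}"
proof -
  have "0 < M"
    using M_ge by simp
  note feasible = feasible_set_P_M_eq_cone[where K = "{1..Na}" and C = "\<lambda>x. \<forall>l\<in>{1..L}. c l x \<le> 0",
      OF rho_pos xi_nn \<open>0 < M\<close>]
  show ?thesis
    using feasible[where v = "\<lambda>k i m. gvec M (phihat k i) (phitil k i) (theta M m)"]
      feasible[where v = "\<lambda>k i m. hvec (phihat k i) (phitil k i) (theta M m)"]
    by simp
qed

end
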